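(* Let $G$ be a finite abelian group and $\Phi$ a normalized $3$-cocycle on $G$. If $V$ and $W$ are simple objects of ${}^{\mathbbm{k}G}_{\mathbbm{k}G}\mathcal{YD}^{\Phi}$ with $g_V=g_W$, then $\dim V=\dim W$.
   Context: $\mathbbm{k}$ is algebraically closed of characteristic zero. For $g\in G$, $\widetilde{\Phi}_g(x,y)=\frac{\Phi(g,x,y)\Phi(x,y,g)}{\Phi(x,g,y)}$. The braided tensor category ${}^{\mathbbm{k}G}_{\mathbbm{k}G}\mathcal{YD}^{\Phi}$ has objects the $G$-graded spaces $V=\bigoplus_gV_g$ with operators $e\triangleright-$ preserving each $V_g$, $1\triangleright v=v$, $e\triangleright(f\triangleright v)=\widetilde{\Phi}_g(e,f)(ef)\triangleright v$ for $v\in V_g$; tensor product: degree $gh$, $e\triangleright(X\otimes Y)=\widetilde{\Phi}_e(g,h)(e\triangleright X)\otimes(e\triangleright Y)$; associator $(X\otimes Y)\otimes Z\mapsto\Phi(e,f,g)^{-1}X\otimes(Y\otimes Z)$; braiding $X\otimes Y\mapsto(e\triangleright Y)\otimes X$. A simple object $V$ is concentrated in a single degree, denoted $g_V$. *)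

theory Defs
  imports Main "HOL-Computational_Algebra.Polynomial"
begin

text \<open>The finite abelian group G is a type 'g of class ab_group_add and finite,
written additively: the unit 1 of G is 0, the product ef is e + f.\<close>

definition normalized_3cocycle :: "('g::ab_group_add \<Rightarrow> 'g \<Rightarrow> 'g \<Rightarrow> 'k::field) \<Rightarrow> bool" where
  "normalized_3cocycle \<Phi> \<longleftrightarrow>
     (\<forall>x y z. \<Phi> x y z \<noteq> 0) \<and>
     (\<forall>e f g h. \<Phi> (e + f) g h * \<Phi> e f (g + h) = \<Phi> e f g * \<Phi> e (f + g) h * \<Phi> f g h) \<and>
     (\<forall>x y. \<Phi> 0 x y = 1 \<and> \<Phi> x 0 y = 1 \<and> \<Phi> x y 0 = 1)"

definition Phi_tilde :: "('g::ab_group_add \<Rightarrow> 'g \<Rightarrow> 'g \<Rightarrow> 'k::field) \<Rightarrow> 'g \<Rightarrow> 'g \<Rightarrow> 'g \<Rightarrow> 'k" where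
  "Phi_tilde \<Phi> g x y = \<Phi> g x y * \<Phi> x y g / \<Phi> x g y"

text \<open>An object of the Yetter-Drinfeld category: a subspace V of a k-vector space
(scalar multiplication sc) which is the internal direct sum of homogeneous
components cmp g (g in G), together with operators act e (the action e \<triangleright> -).\<close>

definition yd_object ::
  "('k::field \<Rightarrow> 'v::ab_group_add \<Rightarrow> 'v) \<Rightarrow> ('g::{ab_group_add,finite} \<Rightarrow> 'g \<Rightarrow> 'g \<Rightarrow> 'k)
   \<Rightarrow> 'v set \<Rightarrow> ('g \<Rightarrow> 'v set) \<Rightarrow> ('g \<Rightarrow> 'v \<Rightarrow> 'v) \<Rightarrow> bool" where
  "yd_object sc \<Phi> V cmp act \<longleftrightarrow>
     vector_space sc \<and>
     (\<forall>g. module.subspace sc (cmp g) \<and> cmp g \<subseteq> V) \<and>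
     V = {sum x UNIV | x. \<forall>g. x g \<in> cmp g} \<and>
     (\<forall>x. (\<forall>g. x g \<in> cmp g) \<and> sum x UNIV = 0 \<longrightarrow> (\<forall>g. x g = 0)) \<and>
     (\<forall>e g v. v \<in> cmp g \<longrightarrow> act e v \<in> cmp g) \<and>
     (\<forall>e c. \<forall>u\<in>V. \<forall>v\<in>V. act e (sc c u + v) = sc c (act e u) + act e v) \<and>
     (\<forall>v\<in>V. act 0 v = v) \<and>
     (\<forall>g e f. \<forall>v\<in>cmp g. act e (act f v) = sc (Phi_tilde \<Phi> g e f) (act (e + f) v))"

definition yd_subobject ::
  "('k::field \<Rightarrow> 'v::ab_group_add \<Rightarrow> 'v) \<Rightarrow> 'v set \<Rightarrow> 'v set \<Rightarrow> ('g::{ab_group_add,finite} \<Rightarrow> 'v set)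
   \<Rightarrow> ('g \<Rightarrow> 'v \<Rightarrow> 'v) \<Rightarrow> bool" where
  "yd_subobject sc U V cmp act \<longleftrightarrow>
     module.subspace sc U \<and> U \<subseteq> V \<and>
     U = {sum x UNIV | x. \<forall>g. x g \<in> U \<inter> cmp g} \<and>
     (\<forall>e. \<forall>u\<in>U. act e u \<in> U)"

definition yd_simple ::
  "('k::field \<Rightarrow> 'v::ab_group_add \<Rightarrow> 'v) \<Rightarrow> ('g::{ab_group_add,finite} \<Rightarrow> 'g \<Rightarrow> 'g \<Rightarrow> 'k)
   \<Rightarrow> 'v set \<Rightarrow> ('g \<Rightarrow> 'v set) \<Rightarrow> ('g \<Rightarrow> 'v \<Rightarrow> 'v) \<Rightarrow> bool" where
  "yd_simple sc \<Phi> V cmp act \<longleftrightarrow>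
     yd_object sc \<Phi> V cmp act \<and> V \<noteq> {0} \<and>
     (\<forall>U. yd_subobject sc U V cmp act \<longrightarrow> U = {0} \<or> U = V)"

text \<open>The degree g_V of a simple object: the unique degree in which it is concentrated.\<close>

definition yd_degree :: "('g \<Rightarrow> 'v set) \<Rightarrow> 'v set \<Rightarrow> 'g" where
  "yd_degree cmp V = (THE g. cmp g = V)"

end

theory Submission
  imports Defs "HOL-Library.Function_Algebras"
begin

text \<open>Since \<open>V\<close> and \<open>W\<close> are concentrated in the same degree \<open>g\<close>, the operators \<open>e \<triangleright> -\<close> make
  both of them projective representations of \<open>G\<close> with the same multiplier \<open>\<alpha> = Phi_tilde \<Phi> g\<close>, and
  simplicity becomes irreducibility. Twisted conjugation
  \<open>\<phi> \<mapsto> \<alpha>(-e,e)\<^sup>-\<^sup>1 (e \<triangleright> -) \<circ> \<phi> \<circ> (-e \<triangleright> -)\<close> is then a genuine linear action of \<open>G\<close> on the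
  linear maps \<open>V \<rightarrow> W\<close>, since the multipliers cancel. As \<open>G\<close> is finite abelian and \<open>\<bbbk>\<close>
  algebraically closed, these commuting operators of finite order have a common eigenvector
  \<open>\<phi> \<noteq> 0\<close>, i.e. \<open>e \<triangleright> \<phi>(v) = \<chi>(e) \<phi>(e \<triangleright> v)\<close> with \<open>\<chi>(e) \<noteq> 0\<close>. Kernel and image of \<open>\<phi>\<close> are
  then stable subspaces, so \<open>\<phi>\<close> is bijective and \<open>dim V = dim W\<close>.\<close>

section \<open>Linear maps on subspaces\<close>

definition linear_on ::
  "('k::field \<Rightarrow> 'a::ab_group_add \<Rightarrow> 'a) \<Rightarrow> ('k \<Rightarrow> 'b::ab_group_add \<Rightarrow> 'b) \<Rightarrow> 'a set \<Rightarrow> ('a \<Rightarrow> 'b) \<Rightarrow> bool"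
  where "linear_on s1 s2 V f \<longleftrightarrow>
    (\<forall>u\<in>V. \<forall>v\<in>V. f (u + v) = f u + f v) \<and> (\<forall>c. \<forall>v\<in>V. f (s1 c v) = s2 c (f v))"

lemma linear_onI:
  assumes "\<And>u v. u \<in> V \<Longrightarrow> v \<in> V \<Longrightarrow> f (u + v) = f u + f v"
    and "\<And>c v. v \<in> V \<Longrightarrow> f (s1 c v) = s2 c (f v)"
  shows "linear_on s1 s2 V f"
  using assms unfolding linear_on_def by blast

lemma linear_on_add: "linear_on s1 s2 V f \<Longrightarrow> u \<in> V \<Longrightarrow> v \<in> V \<Longrightarrow> f (u + v) = f u + f v"
  unfolding linear_on_def by blast

lemma linear_on_scale: "linear_on s1 s2 V f \<Longrightarrow> v \<in> V \<Longrightarrow> f (s1 c v) = s2 c (f v)"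
  unfolding linear_on_def by blast

lemma linear_on_0: "linear_on s1 s2 V f \<Longrightarrow> 0 \<in> V \<Longrightarrow> f 0 = 0"
  using linear_on_add[of s1 s2 V f 0 0] by simp

lemma linear_on_subset: "linear_on s1 s2 V f \<Longrightarrow> U \<subseteq> V \<Longrightarrow> linear_on s1 s2 U f"
  unfolding linear_on_def by blast

context vector_space
begin

lemma linear_on_sum:
  assumes "subspace V" "linear_on scale s2 V f" "\<And>a. a \<in> I \<Longrightarrow> x a \<in> V"
  shows "f (sum x I) = (\<Sum>a\<in>I. f (x a))"
  using assms(3)
proof (induction I rule: infinite_finite_induct)
  case (insert a I)
  have "sum x I \<in> V" using insert by (intro subspace_sum[OF assms(1)]) auto
  then show ?case using insert linear_on_add[OF assms(2)] by simp
qed (use linear_on_0[OF assms(2) subspace_0[OF assms(1)]] in auto)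

lemma linear_on_combination:
  assumes "subspace V" "linear_on scale s2 V f" "T \<subseteq> V"
  shows "f (\<Sum>a\<in>T. scale (r a) a) = (\<Sum>a\<in>T. s2 (r a) (f a))"
  using assms linear_on_sum[OF assms(1,2), of T "\<lambda>a. scale (r a) a"]
  by (auto simp: subspace_scale linear_on_scale subset_iff)

lemma linear_on_subspace_kernel:
  assumes "subspace V" "linear_on scale s2 V f"
  shows "subspace {v \<in> V. f v = 0}"
proof -
  have "s2 c 0 = 0" for c
    using linear_on_scale[OF assms(2) subspace_0[OF assms(1)], of c]
      linear_on_0[OF assms(2) subspace_0[OF assms(1)]] by simp
  then show ?thesis
    using assms subspace_0[OF assms(1)] subspace_add[OF assms(1)] subspace_scale[OF assms(1)]
    by (auto simp: subspace_def linear_on_0 linear_on_add linear_on_scale)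
qed

lemma linear_on_subspace_image:
  assumes "subspace V" "linear_on scale s2 V f" "vector_space s2"
  shows "module.subspace s2 (f ` V)"
proof -
  interpret s2: vector_space s2 by fact
  show ?thesis
  proof (rule s2.subspaceI)
    show "0 \<in> f ` V"
      using linear_on_0[OF assms(2) subspace_0[OF assms(1)]] subspace_0[OF assms(1)] by force
    show "x + y \<in> f ` V" if "x \<in> f ` V" "y \<in> f ` V" for x y
      using that subspace_add[OF assms(1)] linear_on_add[OF assms(2)] by (auto simp: image_iff) metis
    show "s2 c x \<in> f ` V" if "x \<in> f ` V" for c x
      using that subspace_scale[OF assms(1)] linear_on_scale[OF assms(2)] by (auto simp: image_iff) metis
  qed
qed

lemma inj_on_if_linear_on_kernel_trivial:
  assumes "subspace V" "linear_on scale s2 V f" "\<And>v. v \<in> V \<Longrightarrow> f v = 0 \<Longrightarrow> v = 0"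
  shows "inj_on f V"
proof (rule inj_onI)
  fix u v assume uv: "u \<in> V" "v \<in> V" "f u = f v"
  have "-v \<in> V" using subspace_neg[OF assms(1) uv(2)] .
  have "f (-v) + f v = 0"
    using linear_on_add[OF assms(2) \<open>-v \<in> V\<close> uv(2)] linear_on_0[OF assms(2) subspace_0[OF assms(1)]]
    by simp
  then have "f (u + -v) = 0"
    using linear_on_add[OF assms(2) uv(1) \<open>-v \<in> V\<close>] uv(3) by (simp add: add.commute)
  then have "u + -v = 0" using assms(3) subspace_add[OF assms(1) uv(1) \<open>-v \<in> V\<close>] by blast
  then show "u = v" by (simp add: add_eq_0_iff2)
qed

end

context vector_space_pair
begin

lemma dim_eq_if_bij_betw_linear_on:
  assumes V: "vs1.subspace V" and f: "linear_on s1 s2 V f" "bij_betw f V W"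
  shows "vs1.dim V = vs2.dim W"
proof -
  obtain B where B: "B \<subseteq> V" "vs1.independent B" "V \<subseteq> vs1.span B" "card B = vs1.dim V"
    using vs1.basis_exists by blast
  have inj: "inj_on f V" and img: "f ` V = W" using f(2) by (auto simp: bij_betw_def)
  have "vs2.independent (f ` B)"
  proof
    assume "vs2.dependent (f ` B)"
    then obtain T' r where T': "finite T'" "T' \<subseteq> f ` B" "(\<Sum>w\<in>T'. s2 (r w) w) = 0" "\<exists>w\<in>T'. r w \<noteq> 0"
      unfolding vs2.dependent_explicit by blast
    obtain T where T: "T \<subseteq> B" "inj_on f T" "T' = f ` T"
      using T'(2) unfolding subset_image_inj by blast
    have "finite T" using T(2,3) T'(1) by (simp add: finite_image_iff)
    have TV: "T \<subseteq> V" using T B by blast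
    have sum_V: "(\<Sum>a\<in>T. s1 (r (f a)) a) \<in> V"
      using TV by (intro vs1.subspace_sum[OF V] vs1.subspace_scale[OF V]) auto
    have "f (\<Sum>a\<in>T. s1 (r (f a)) a) = (\<Sum>a\<in>T. s2 (r (f a)) (f a))"
      by (rule vs1.linear_on_combination[OF V f(1) TV])
    also have "\<dots> = f 0"
      using T'(3) T sum.reindex[OF T(2), of "\<lambda>w. s2 (r w) w"] linear_on_0[OF f(1) vs1.subspace_0[OF V]]
      by simp
    finally have "(\<Sum>a\<in>T. s1 (r (f a)) a) = 0"
      using inj_onD[OF inj] sum_V vs1.subspace_0[OF V] by blast
    moreover have "\<exists>a\<in>T. r (f a) \<noteq> 0" using T'(4) T by blast
    ultimately have "vs1.dependent B"
      unfolding vs1.dependent_explicit using \<open>finite T\<close> T(1)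
      by (intro exI[of _ T] exI[of _ "\<lambda>a. r (f a)"]) blast
    then show False using B by blast
  qed
  moreover have "W \<subseteq> vs2.span (f ` B)"
  proof
    fix w assume "w \<in> W"
    then obtain v where v: "v \<in> V" "w = f v" using img by blast
    then obtain T r where T: "finite T" "T \<subseteq> B" "v = (\<Sum>a\<in>T. s1 (r a) a)"
      using B(3) unfolding vs1.span_explicit by blast
    have "w = (\<Sum>a\<in>T. s2 (r a) (f a))"
      unfolding v T(3) using T B by (intro vs1.linear_on_combination[OF V f(1)]) auto
    also have "\<dots> \<in> vs2.span (f ` B)"
      using T by (intro vs2.span_sum vs2.span_scale vs2.span_base) auto
    finally show "w \<in> vs2.span (f ` B)" .
  qed
  ultimately have "card (f ` B) = vs2.dim W"
    using B img by (intro vs2.basis_card_eq_dim) auto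
  moreover have "card (f ` B) = card B" using inj_on_subset[OF inj B(1)] by (rule card_image)
  ultimately show ?thesis using B by simp
qed

end


section \<open>Eigenvectors of operators of finite order\<close>

locale linear_operator = vector_space scale
  for scale :: "'k::alg_closed_field \<Rightarrow> 'a::ab_group_add \<Rightarrow> 'a" +
  fixes A :: "'a \<Rightarrow> 'a" and S :: "'a set"
  assumes subspace_S: "subspace S"
    and maps_S: "x \<in> S \<Longrightarrow> A x \<in> S"
    and linear_on_S: "linear_on scale scale S A"
begin

lemma add: "x \<in> S \<Longrightarrow> y \<in> S \<Longrightarrow> A (x + y) = A x + A y"
  by (rule linear_on_add[OF linear_on_S])

lemma scale: "x \<in> S \<Longrightarrow> A (scale c x) = scale c (A x)"
  by (rule linear_on_scale[OF linear_on_S])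

lemma sum: "(\<And>i. i \<in> I \<Longrightarrow> f i \<in> S) \<Longrightarrow> A (sum f I) = (\<Sum>i\<in>I. A (f i))"
  by (rule linear_on_sum[OF subspace_S linear_on_S])

lemma funpow_maps_S: "x \<in> S \<Longrightarrow> (A ^^ n) x \<in> S"
  by (induction n) (auto intro: maps_S)

lemma funpow_add: "x \<in> S \<Longrightarrow> y \<in> S \<Longrightarrow> (A ^^ n) (x + y) = (A ^^ n) x + (A ^^ n) y"
  by (induction n) (auto simp: add funpow_maps_S)

lemma funpow_scale: "x \<in> S \<Longrightarrow> (A ^^ n) (scale c x) = scale c ((A ^^ n) x)"
  by (induction n) (auto simp: scale funpow_maps_S)

definition poly_op :: "'k poly \<Rightarrow> 'a \<Rightarrow> 'a" where
  "poly_op p x = (\<Sum>i\<le>degree p. scale (coeff p i) ((A ^^ i) x))"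

lemma poly_op_bound:
  "degree p \<le> n \<Longrightarrow> poly_op p x = (\<Sum>i\<le>n. scale (coeff p i) ((A ^^ i) x))"
  unfolding poly_op_def by (intro sum.mono_neutral_left) (auto simp: coeff_eq_0)

lemma poly_op_const: "poly_op [:c:] x = scale c x"
  by (simp add: poly_op_def)

lemma poly_op_add: "poly_op (p + q) x = poly_op p x + poly_op q x"
proof -
  let ?n = "max (degree p) (degree q)"
  have "poly_op (p + q) x = (\<Sum>i\<le>?n. scale (coeff (p + q) i) ((A ^^ i) x))"
    by (rule poly_op_bound) (simp add: degree_add_le)
  also have "\<dots> = poly_op p x + poly_op q x"
    by (simp add: poly_op_bound[of p ?n] poly_op_bound[of q ?n] scale_left_distrib sum.distrib)
  finally show ?thesis .
qed

lemma poly_op_smult: "poly_op (smult c p) x = scale c (poly_op p x)"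
  by (simp add: poly_op_bound[of "smult c p" "degree p"] poly_op_def scale_sum_right)

lemma poly_op_commute: "x \<in> S \<Longrightarrow> poly_op p (A x) = A (poly_op p x)"
  unfolding poly_op_def
  by (subst sum) (auto simp: scale funpow_maps_S subspace_scale[OF subspace_S] funpow_swap1)

lemma poly_op_pCons_0: "x \<in> S \<Longrightarrow> poly_op (pCons 0 p) x = A (poly_op p x)"
proof -
  assume x: "x \<in> S"
  have "poly_op (pCons 0 p) x = (\<Sum>i\<le>Suc (degree p). scale (coeff (pCons 0 p) i) ((A ^^ i) x))"
    by (rule poly_op_bound) (simp add: degree_pCons_le)
  also have "\<dots> = (\<Sum>i\<le>degree p. scale (coeff p i) ((A ^^ Suc i) x))"
    by (subst sum.atMost_Suc_shift) simp
  also have "\<dots> = poly_op p (A x)"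
    unfolding poly_op_def funpow_Suc_right by simp
  finally show ?thesis using poly_op_commute[OF x] by simp
qed

lemma poly_op_monom: "x \<in> S \<Longrightarrow> poly_op (monom 1 n) x = (A ^^ n) x"
proof (induction n)
  case 0
  then show ?case by (simp add: poly_op_def)
next
  case (Suc n)
  then show ?case by (simp add: monom_Suc poly_op_pCons_0)
qed

lemma poly_op_add_right: "x \<in> S \<Longrightarrow> y \<in> S \<Longrightarrow> poly_op p (x + y) = poly_op p x + poly_op p y"
  unfolding poly_op_def by (simp add: funpow_add scale_right_distrib sum.distrib)

lemma poly_op_scale_right: "x \<in> S \<Longrightarrow> poly_op p (scale c x) = scale c (poly_op p x)"
  unfolding poly_op_def by (simp add: funpow_scale scale_sum_right mult.commute)

lemma poly_op_linear_factor:
  assumes x: "x \<in> S"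
  shows "poly_op ([:-c, 1:] * q) x = poly_op q (A x - scale c x)"
proof -
  have "[:-c, 1:] * q = smult (-c) q + pCons 0 q" by simp
  then have "poly_op ([:-c, 1:] * q) x = scale (-c) (poly_op q x) + A (poly_op q x)"
    by (simp only: poly_op_add poly_op_smult poly_op_pCons_0[OF x])
  also have "\<dots> = poly_op q (A x) + poly_op q (scale (-c) x)"
    by (simp only: poly_op_commute[OF x] poly_op_scale_right[OF x] add.commute)
  also have "\<dots> = poly_op q (A x + scale (-c) x)"
    by (rule poly_op_add_right[symmetric]) (use x in \<open>auto intro: maps_S subspace_neg[OF subspace_S] subspace_scale[OF subspace_S]\<close>)
  also have "\<dots> = poly_op q (A x - scale c x)"
    by simp
  finally show ?thesis .
qed

text \<open>Split off the linear factors \<open>X - c\<close> of an annihilating polynomial one at a time: the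
  first \<open>A - c\<close> that kills the current vector yields an eigenvector.\<close>

lemma eigenvector_if_poly_op_eq_0:
  assumes "p \<noteq> 0" "x \<in> S" "x \<noteq> 0" "poly_op p x = 0"
  shows "\<exists>y c. y \<in> S \<and> y \<noteq> 0 \<and> A y = scale c y"
  using assms
proof (induction "degree p" arbitrary: p x rule: less_induct)
  case less
  show ?case
  proof (cases "degree p = 0")
    case True
    then obtain a where "p = [:a:]" by (metis degree_eq_zeroE)
    with less.prems show ?thesis by (simp add: poly_op_const)
  next
    case False
    then obtain c where "poly p c = 0" using alg_closed_imp_poly_has_root by blast
    then obtain q where q: "p = [:-c, 1:] * q" unfolding poly_eq_0_iff_dvd by (auto elim: dvdE)
    with less.prems have "q \<noteq> 0" by auto
    then have "degree p = Suc (degree q)"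
      unfolding q by (subst degree_mult_eq) auto
    then have deg_q: "degree q < degree p" by simp
    define y where "y = A x - scale c x"
    have "y \<in> S"
      unfolding y_def using less.prems
      by (intro subspace_diff[OF subspace_S] maps_S subspace_scale[OF subspace_S])
    show ?thesis
    proof (cases "y = 0")
      case True
      then show ?thesis using less.prems unfolding y_def by auto
    next
      case False
      have "poly_op q y = 0" using less.prems q poly_op_linear_factor unfolding y_def by metis
      then show ?thesis using less.hyps[OF deg_q \<open>q \<noteq> 0\<close> \<open>y \<in> S\<close> False] by blast
    qed
  qed
qed

lemma eigenvector_if_funpow_eq_id:
  assumes "m > 0" "\<And>x. x \<in> S \<Longrightarrow> (A ^^ m) x = x" "x \<in> S" "x \<noteq> 0"
  shows "\<exists>y c. y \<in> S \<and> y \<noteq> 0 \<and> A y = scale c y"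
proof -
  define p :: "'k poly" where "p = monom 1 m + smult (-1) [:1:]"
  have "coeff p m = 1"
    using assms(1) by (cases m) (simp_all add: p_def)
  then have "p \<noteq> 0" by auto
  moreover have "poly_op p x = 0"
    using assms by (simp add: p_def poly_op_add poly_op_smult poly_op_monom poly_op_const)
  ultimately show ?thesis using eigenvector_if_poly_op_eq_0 assms(3,4) by blast
qed

end
lemma common_eigenvector:
  fixes scale :: "'k::alg_closed_field \<Rightarrow> 'a::ab_group_add \<Rightarrow> 'a" and \<rho> :: "'i \<Rightarrow> 'a \<Rightarrow> 'a"
  assumes "vector_space scale" "finite I"
    and "module.subspace scale S"
    and "\<And>i x. x \<in> S \<Longrightarrow> \<rho> i x \<in> S"
    and "\<And>i. linear_on scale scale S (\<rho> i)"
    and "\<And>i j x. x \<in> S \<Longrightarrow> \<rho> i (\<rho> j x) = \<rho> j (\<rho> i x)"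
    and "\<And>i. \<exists>m>0. \<forall>x\<in>S. (\<rho> i ^^ m) x = x"
    and "x \<in> S" "x \<noteq> 0"
  shows "\<exists>y\<in>S. y \<noteq> 0 \<and> (\<forall>i\<in>I. \<exists>c. \<rho> i y = scale c y)"
  using assms(2-)
proof (induction I arbitrary: S x rule: finite_induct)
  case empty
  then show ?case by blast
next
  case (insert i I)
  interpret vector_space scale by fact
  interpret linear_operator scale "\<rho> i" S
    using insert.prems by unfold_locales auto
  obtain m where "m > 0" "\<forall>x\<in>S. (\<rho> i ^^ m) x = x" using insert.prems(5) by blast
  then obtain y c where y: "y \<in> S" "y \<noteq> 0" "\<rho> i y = scale c y"
    using eigenvector_if_funpow_eq_id insert.prems(6,7) by blast
  define E where "E = {z \<in> S. \<rho> i z = scale c z}"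
  have "E \<subseteq> S" unfolding E_def by blast
  have y_E: "y \<in> E" using y unfolding E_def by blast
  have sub_E: "subspace E"
    unfolding subspace_def
  proof (intro conjI ballI allI)
    show "0 \<in> E"
      unfolding E_def using subspace_0[OF subspace_S] linear_on_0[OF linear_on_S] by simp
    show "u + v \<in> E" if "u \<in> E" "v \<in> E" for u v
      using that subspace_add[OF subspace_S] unfolding E_def by (simp add: add scale_right_distrib)
    show "scale a u \<in> E" if "u \<in> E" for a u
      using that subspace_scale[OF subspace_S] unfolding E_def by (simp add: scale scale_left_commute)
  qed
  have stable_E: "\<rho> j z \<in> E" if "z \<in> E" for j z
  proof -
    have z: "z \<in> S" "\<rho> i z = scale c z" using that unfolding E_def by auto
    have "\<rho> i (\<rho> j z) = \<rho> j (scale c z)" using insert.prems(4)[OF z(1), of i j] z(2) by simp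
    also have "\<dots> = scale c (\<rho> j z)" by (rule linear_on_scale[OF insert.prems(3) z(1)])
    finally show ?thesis unfolding E_def using insert.prems(2) z(1) by blast
  qed
  have comm_E: "\<rho> j (\<rho> k z) = \<rho> k (\<rho> j z)" if "z \<in> E" for j k z
    using that \<open>E \<subseteq> S\<close> insert.prems(4) by blast
  have per_E: "\<exists>m>0. \<forall>z\<in>E. (\<rho> j ^^ m) z = z" for j
    using insert.prems(5)[of j] \<open>E \<subseteq> S\<close> by blast
  obtain w where "w \<in> E" "w \<noteq> 0" "\<forall>j\<in>I. \<exists>c. \<rho> j w = scale c w"
    using insert.IH[OF sub_E stable_E linear_on_subset[OF insert.prems(3) \<open>E \<subseteq> S\<close>]
        comm_E per_E y_E y(2)] by blast
  then show ?case unfolding E_def by auto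
qed


section \<open>Projective representations of a finite abelian group\<close>

locale projective_rep = vector_space scale
  for scale :: "'k::field \<Rightarrow> 'v::ab_group_add \<Rightarrow> 'v" +
  fixes \<alpha> :: "'g::ab_group_add \<Rightarrow> 'g \<Rightarrow> 'k" and V :: "'v set" and act :: "'g \<Rightarrow> 'v \<Rightarrow> 'v"
  assumes subspace_V: "subspace V"
    and act_closed: "v \<in> V \<Longrightarrow> act e v \<in> V"
    and linear_on_act: "linear_on scale scale V (act e)"
    and act_0: "v \<in> V \<Longrightarrow> act 0 v = v"
    and act_act: "v \<in> V \<Longrightarrow> act e (act f v) = scale (\<alpha> e f) (act (e + f) v)"
    and multiplier_nonzero: "\<alpha> e f \<noteq> 0"
begin

definition irreducible :: bool where
  "irreducible \<longleftrightarrow> V \<noteq> {0} \<and>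
    (\<forall>U. subspace U \<longrightarrow> U \<subseteq> V \<longrightarrow> (\<forall>e. \<forall>u\<in>U. act e u \<in> U) \<longrightarrow> U = {0} \<or> U = V)"

lemma irreducible_nonzero: "irreducible \<Longrightarrow> V \<noteq> {0}"
  unfolding irreducible_def by blast

lemma irreducibleD:
  "irreducible \<Longrightarrow> subspace U \<Longrightarrow> U \<subseteq> V \<Longrightarrow> (\<And>e u. u \<in> U \<Longrightarrow> act e u \<in> U) \<Longrightarrow> U = {0} \<or> U = V"
  unfolding irreducible_def by blast

lemma act_add: "u \<in> V \<Longrightarrow> v \<in> V \<Longrightarrow> act e (u + v) = act e u + act e v"
  by (rule linear_on_add[OF linear_on_act])

lemma act_scale: "v \<in> V \<Longrightarrow> act e (scale c v) = scale c (act e v)"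
  by (rule linear_on_scale[OF linear_on_act])

lemma act_inverse: "v \<in> V \<Longrightarrow> act (-e) (act e v) = scale (\<alpha> (-e) e) v"
  by (simp add: act_act act_0)

text \<open>Instead of deriving these identities from a cocycle condition on \<open>\<alpha>\<close>, we read them off
  from the action on a nonzero vector.\<close>

lemma multiplier_0_0:
  assumes "V \<noteq> {0}"
  shows "\<alpha> 0 0 = 1"
proof -
  obtain v where v: "v \<in> V" "v \<noteq> 0" using assms subspace_0[OF subspace_V] by blast
  have "scale (\<alpha> 0 0) v = scale 1 v"
    using act_act[OF v(1), of 0 0] by (simp add: act_0 act_closed v(1))
  then show ?thesis using v(2) scale_cancel_right by blast
qed

lemma multiplier_inverse_identity:
  assumes "V \<noteq> {0}"
  shows "\<alpha> e f * \<alpha> (-f) (-e) * \<alpha> (-(e + f)) (e + f) = \<alpha> (-e) e * \<alpha> (-f) f"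
proof -
  obtain v where v: "v \<in> V" "v \<noteq> 0" using assms subspace_0[OF subspace_V] by blast
  have fv: "act f v \<in> V" and efv: "act (e + f) v \<in> V" using act_closed v(1) by auto
  have "act (-f) (act (-e) (act e (act f v))) = scale (\<alpha> (-e) e * \<alpha> (-f) f) v"
    using act_inverse[OF fv, of e] act_scale[OF fv] act_inverse[OF v(1), of f] by (simp add: mult.commute)
  moreover have "act (-f) (act (-e) (act e (act f v))) =
      scale (\<alpha> e f) (act (-f) (act (-e) (act (e + f) v)))"
    using act_act[OF v(1), of e f] act_scale act_closed efv by simp
  moreover have "act (-f) (act (-e) (act (e + f) v)) =
      scale (\<alpha> (-f) (-e) * \<alpha> (-(e + f)) (e + f)) v"
    using act_act[OF efv, of "-f" "-e"] act_inverse[OF v(1), of "e + f"] by (simp add: add.commute)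
  ultimately show ?thesis using v(2) by (simp add: mult.assoc)
qed

end

lemma exists_iterate_add_eq_0:
  fixes e :: "'g::{group_add,finite}"
  shows "\<exists>m>0. ((+) e ^^ m) 0 = 0"
proof -
  define s where "s n = ((+) e ^^ n) 0" for n
  have s_add: "s (m + n) = s m + s n" for m n
    unfolding s_def funpow_add comp_def by (induction m) (simp_all add: add.assoc)
  have "\<not> inj s"
  proof
    assume "inj s"
    then have "finite (UNIV :: nat set)" by (rule inj_on_finite[OF _ subset_UNIV finite_UNIV])
    then show False by simp
  qed
  then obtain i j where ij: "i < j" "s i = s j"
    unfolding inj_def by (metis linorder_neq_iff)
  then have "s (j - i) + s j = 0 + s j" using s_add[of "j - i" i] by simp
  then have "s (j - i) = 0" by (rule add_right_imp_eq)
  then show ?thesis using ij(1) unfolding s_def by (intro exI[of _ "j - i"]) simp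
qed

locale projective_rep_pair =
  V: projective_rep scV \<alpha> V actV + W: projective_rep scW \<alpha> W actW
  for scV :: "'k::alg_closed_field \<Rightarrow> 'v::ab_group_add \<Rightarrow> 'v"
    and \<alpha> :: "'g::{ab_group_add,finite} \<Rightarrow> 'g \<Rightarrow> 'k" and V actV
    and scW :: "'k \<Rightarrow> 'w::ab_group_add \<Rightarrow> 'w" and W actW +
  assumes V_nonzero: "V \<noteq> {0}" and W_nonzero: "W \<noteq> {0}"
begin

definition fun_scale :: "'k \<Rightarrow> ('v \<Rightarrow> 'w) \<Rightarrow> 'v \<Rightarrow> 'w" where
  "fun_scale c \<phi> = (\<lambda>v. scW c (\<phi> v))"

text \<open>Maps are made to vanish outside \<open>V\<close>, so that they are determined by their restriction
  to \<open>V\<close>.\<close>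

definition hom_space :: "('v \<Rightarrow> 'w) set" where
  "hom_space = {\<phi>. linear_on scV scW V \<phi> \<and> \<phi> ` V \<subseteq> W \<and> (\<forall>v. v \<notin> V \<longrightarrow> \<phi> v = 0)}"

text \<open>\<open>actV (-e)\<close> inverts \<open>actV e\<close> only up to the scalar \<open>\<alpha> (-e) e\<close>; dividing by it makes the
  multipliers cancel, so that this is a genuine action of \<open>G\<close> (\<open>twisted_conj_add\<close>).\<close>

definition twisted_conj :: "'g \<Rightarrow> ('v \<Rightarrow> 'w) \<Rightarrow> 'v \<Rightarrow> 'w" where
  "twisted_conj e \<phi> =
    (\<lambda>v. if v \<in> V then scW (inverse (\<alpha> (-e) e)) (actW e (\<phi> (actV (-e) v))) else 0)"

lemma vector_space_fun_scale: "vector_space fun_scale"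
  unfolding fun_scale_def
  by unfold_locales (simp_all add: fun_eq_iff W.scale_right_distrib W.scale_left_distrib)

lemma hom_spaceI:
  assumes "linear_on scV scW V \<phi>" "\<And>v. v \<in> V \<Longrightarrow> \<phi> v \<in> W" "\<And>v. v \<notin> V \<Longrightarrow> \<phi> v = 0"
  shows "\<phi> \<in> hom_space"
  using assms unfolding hom_space_def by blast

lemma hom_spaceD:
  assumes "\<phi> \<in> hom_space"
  shows "linear_on scV scW V \<phi>" and "\<And>v. v \<in> V \<Longrightarrow> \<phi> v \<in> W" and "\<And>v. v \<notin> V \<Longrightarrow> \<phi> v = 0"
  using assms unfolding hom_space_def by blast+

lemma subspace_hom_space: "module.subspace fun_scale hom_space"
proof -
  interpret F: vector_space fun_scale by (rule vector_space_fun_scale)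
  show ?thesis
  proof (rule F.subspaceI)
    show "0 \<in> hom_space"
      by (rule hom_spaceI) (auto intro: linear_onI W.subspace_0[OF W.subspace_V])
  next
    fix \<phi> \<psi> assume "\<phi> \<in> hom_space" "\<psi> \<in> hom_space"
    note \<phi> = hom_spaceD[OF this(1)] and \<psi> = hom_spaceD[OF this(2)]
    show "\<phi> + \<psi> \<in> hom_space"
    proof (rule hom_spaceI[OF linear_onI])
      show "(\<phi> + \<psi>) (u + v) = (\<phi> + \<psi>) u + (\<phi> + \<psi>) v" if "u \<in> V" "v \<in> V" for u v
        using linear_on_add[OF \<phi>(1) that] linear_on_add[OF \<psi>(1) that] by (simp add: algebra_simps)
      show "(\<phi> + \<psi>) (scV c v) = scW c ((\<phi> + \<psi>) v)" if "v \<in> V" for c v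
        using linear_on_scale[OF \<phi>(1) that] linear_on_scale[OF \<psi>(1) that]
        by (simp add: W.scale_right_distrib)
      show "(\<phi> + \<psi>) v \<in> W" if "v \<in> V" for v
        using W.subspace_add[OF W.subspace_V \<phi>(2)[OF that] \<psi>(2)[OF that]] by simp
      show "(\<phi> + \<psi>) v = 0" if "v \<notin> V" for v
        using \<phi>(3)[OF that] \<psi>(3)[OF that] by simp
    qed
  next
    fix c \<phi> assume "\<phi> \<in> hom_space"
    note \<phi> = hom_spaceD[OF this]
    show "fun_scale c \<phi> \<in> hom_space"
    proof (rule hom_spaceI[OF linear_onI])
      show "fun_scale c \<phi> (u + v) = fun_scale c \<phi> u + fun_scale c \<phi> v" if "u \<in> V" "v \<in> V" for u v
        using linear_on_add[OF \<phi>(1) that] by (simp add: fun_scale_def W.scale_right_distrib)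
      show "fun_scale c \<phi> (scV d v) = scW d (fun_scale c \<phi> v)" if "v \<in> V" for d v
        using linear_on_scale[OF \<phi>(1) that] by (simp add: fun_scale_def W.scale_left_commute)
      show "fun_scale c \<phi> v \<in> W" if "v \<in> V" for v
        using W.subspace_scale[OF W.subspace_V \<phi>(2)[OF that]] by (simp add: fun_scale_def)
      show "fun_scale c \<phi> v = 0" if "v \<notin> V" for v
        using \<phi>(3)[OF that] by (simp add: fun_scale_def)
    qed
  qed
qed

lemma twisted_conj_closed:
  assumes "\<phi> \<in> hom_space"
  shows "twisted_conj e \<phi> \<in> hom_space"
proof (rule hom_spaceI)
  note \<phi> = hom_spaceD[OF assms]
  show "linear_on scV scW V (twisted_conj e \<phi>)"
  proof (rule linear_onI)
    fix u v assume "u \<in> V" "v \<in> V"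
    then show "twisted_conj e \<phi> (u + v) = twisted_conj e \<phi> u + twisted_conj e \<phi> v"
      using V.subspace_add[OF V.subspace_V] V.act_closed \<phi>(2)
      by (simp add: twisted_conj_def V.act_add linear_on_add[OF \<phi>(1)] W.act_add
          W.scale_right_distrib)
  next
    fix c v assume "v \<in> V"
    then show "twisted_conj e \<phi> (scV c v) = scW c (twisted_conj e \<phi> v)"
      using V.subspace_scale[OF V.subspace_V] V.act_closed \<phi>(2)
      by (simp add: twisted_conj_def V.act_scale linear_on_scale[OF \<phi>(1)] W.act_scale
          W.scale_left_commute)
  qed
  show "twisted_conj e \<phi> v \<in> W" if "v \<in> V" for v
    using that V.act_closed \<phi>(2) W.act_closed W.subspace_scale[OF W.subspace_V]
    by (simp add: twisted_conj_def)
  show "twisted_conj e \<phi> v = 0" if "v \<notin> V" for v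
    using that by (simp add: twisted_conj_def)
qed

lemma linear_on_twisted_conj: "linear_on fun_scale fun_scale hom_space (twisted_conj e)"
proof (rule linear_onI)
  fix \<phi> \<psi> assume "\<phi> \<in> hom_space" "\<psi> \<in> hom_space"
  then show "twisted_conj e (\<phi> + \<psi>) = twisted_conj e \<phi> + twisted_conj e \<psi>"
    using hom_spaceD(2) V.act_closed
    by (auto simp: fun_eq_iff twisted_conj_def W.act_add W.scale_right_distrib)
next
  fix c \<phi> assume "\<phi> \<in> hom_space"
  then show "twisted_conj e (fun_scale c \<phi>) = fun_scale c (twisted_conj e \<phi>)"
    using hom_spaceD(2) V.act_closed
    by (auto simp: fun_eq_iff twisted_conj_def fun_scale_def W.act_scale W.scale_left_commute)
qed

lemma twisted_conj_add:
  assumes "\<phi> \<in> hom_space"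
  shows "twisted_conj e (twisted_conj f \<phi>) = twisted_conj (e + f) \<phi>"
proof
  fix v
  show "twisted_conj e (twisted_conj f \<phi>) v = twisted_conj (e + f) \<phi> v"
  proof (cases "v \<in> V")
    case True
    note \<phi> = hom_spaceD[OF assms]
    define x where "x = actV (-(e + f)) v"
    let ?a = "\<lambda>e. inverse (\<alpha> (-e) e)"
    have x: "x \<in> V" "\<phi> x \<in> W" unfolding x_def using V.act_closed[OF True] \<phi>(2) by blast+
    have "actV (-f) (actV (-e) v) = scV (\<alpha> (-f) (-e)) x"
      unfolding x_def using V.act_act[OF True, of "-f" "-e"] by (simp only: minus_add)
    then have "twisted_conj e (twisted_conj f \<phi>) v =
        scW (?a e) (actW e (scW (?a f) (actW f (scW (\<alpha> (-f) (-e)) (\<phi> x)))))"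
      using True V.act_closed by (simp add: twisted_conj_def linear_on_scale[OF \<phi>(1) x(1)])
    also have "\<dots> = scW (?a e * ?a f * \<alpha> (-f) (-e) * \<alpha> e f) (actW (e + f) (\<phi> x))"
      using W.act_scale x(2) W.act_closed W.act_act[OF x(2)] by (simp add: mult_ac)
    also have "?a e * ?a f * \<alpha> (-f) (-e) * \<alpha> e f = ?a (e + f)"
      using V.multiplier_inverse_identity[OF V_nonzero, of e f] V.multiplier_nonzero
      by (simp add: field_simps)
    finally show ?thesis using True by (simp add: twisted_conj_def x_def)
  qed (simp add: twisted_conj_def)
qed

lemma twisted_conj_0:
  assumes "\<phi> \<in> hom_space"
  shows "twisted_conj 0 \<phi> = \<phi>"
proof
  fix v
  show "twisted_conj 0 \<phi> v = \<phi> v"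
    using hom_spaceD[OF assms] V.multiplier_0_0[OF V_nonzero]
    by (cases "v \<in> V") (simp_all add: twisted_conj_def V.act_0 W.act_0)
qed

lemma twisted_conj_funpow:
  assumes "\<phi> \<in> hom_space"
  shows "(twisted_conj e ^^ n) \<phi> = twisted_conj (((+) e ^^ n) 0) \<phi>"
  by (induction n) (simp_all add: assms twisted_conj_0 twisted_conj_add)


lemma hom_space_nontrivial: "\<exists>\<phi>\<in>hom_space. \<phi> \<noteq> 0"
proof -
  obtain B where B: "B \<subseteq> V" "V.independent B" "V \<subseteq> V.span B"
    using V.basis_exists by metis
  have span_B: "V.span B = V" by (rule V.span_subspace[OF B(1,3) V.subspace_V])
  obtain b where "b \<in> B"
    using B(3) V_nonzero V.subspace_0[OF V.subspace_V] by fastforce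
  obtain w where w: "w \<in> W" "w \<noteq> 0" using W_nonzero W.subspace_0[OF W.subspace_V] by blast
  define \<phi> where "\<phi> v = (if v \<in> V then scW (V.representation B v b) w else 0)" for v
  have "\<phi> \<in> hom_space"
  proof (rule hom_spaceI[OF linear_onI])
    fix u v assume "u \<in> V" "v \<in> V"
    then show "\<phi> (u + v) = \<phi> u + \<phi> v"
      using V.subspace_add[OF V.subspace_V] V.representation_add[OF B(2)] span_B
      by (simp add: \<phi>_def W.scale_left_distrib)
  next
    fix c v assume "v \<in> V"
    then show "\<phi> (scV c v) = scW c (\<phi> v)"
      using V.subspace_scale[OF V.subspace_V] V.representation_scale[OF B(2)] span_B
      by (simp add: \<phi>_def)
  qed (use w W.subspace_scale[OF W.subspace_V] in \<open>simp_all add: \<phi>_def\<close>)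
  moreover have "\<phi> b = w"
    using \<open>b \<in> B\<close> B(1) V.representation_basis[OF B(2) \<open>b \<in> B\<close>] by (auto simp: \<phi>_def)
  ultimately show ?thesis using w(2) by (metis zero_fun_apply)
qed

lemma exists_projective_intertwiner:
  "\<exists>\<phi> \<chi>. \<phi> \<in> hom_space \<and> \<phi> \<noteq> 0 \<and> (\<forall>e. \<chi> e \<noteq> 0) \<and>
    (\<forall>e. \<forall>v\<in>V. actW e (\<phi> v) = scW (\<chi> e) (\<phi> (actV e v)))"
proof -
  have period: "\<exists>m>0. \<forall>\<phi>\<in>hom_space. (twisted_conj e ^^ m) \<phi> = \<phi>" for e
    using exists_iterate_add_eq_0[of e] by (auto simp: twisted_conj_funpow twisted_conj_0)
  have commute: "twisted_conj e (twisted_conj f \<phi>) = twisted_conj f (twisted_conj e \<phi>)"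
    if "\<phi> \<in> hom_space" for e f \<phi>
    using that by (simp add: twisted_conj_add add.commute)
  obtain \<phi>0 where "\<phi>0 \<in> hom_space" "\<phi>0 \<noteq> 0" using hom_space_nontrivial by blast
  from common_eigenvector[where \<rho> = twisted_conj, OF vector_space_fun_scale finite_UNIV
      subspace_hom_space twisted_conj_closed linear_on_twisted_conj commute period this]
  obtain \<phi> where \<phi>: "\<phi> \<in> hom_space" "\<phi> \<noteq> 0" "\<forall>e\<in>UNIV. \<exists>c. twisted_conj e \<phi> = fun_scale c \<phi>"
    by blast
  then obtain \<chi> where \<chi>: "\<And>e. twisted_conj e \<phi> = fun_scale (\<chi> e) \<phi>"
    using bchoice[OF \<phi>(3)] by blast
  note \<phi>_hom = hom_spaceD[OF \<phi>(1)]
  have intertwines: "actW e (\<phi> v) = scW (\<chi> e) (\<phi> (actV e v))" if "v \<in> V" for e v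
  proof -
    have "twisted_conj e \<phi> (actV e v) = actW e (\<phi> v)"
      using that V.act_closed V.multiplier_nonzero \<phi>_hom(2)
      by (simp add: twisted_conj_def V.act_inverse linear_on_scale[OF \<phi>_hom(1)] W.act_scale)
    then show ?thesis using \<chi>[of e] by (simp add: fun_scale_def)
  qed
  have "\<chi> e \<noteq> 0" for e
  proof
    assume "\<chi> e = 0"
    have "\<phi> v = 0" if "v \<in> V" for v
    proof -
      have "actW e (\<phi> v) = 0" using intertwines[OF that] \<open>\<chi> e = 0\<close> by simp
      then have "scW (\<alpha> (-e) e) (\<phi> v) = 0"
        using W.act_inverse[OF \<phi>_hom(2)[OF that], of e]
          W.act_scale[OF W.subspace_0[OF W.subspace_V], of _ 0] by simp
      then show ?thesis using V.multiplier_nonzero by simp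
    qed
    then have "\<phi> = 0" using \<phi>_hom(3) by (intro ext) (metis zero_fun_apply)
    then show False using \<phi>(2) by blast
  qed
  then show ?thesis using \<phi>(1,2) intertwines by blast
qed

lemma dim_eq_if_irreducible:
  assumes "V.irreducible" "W.irreducible"
  shows "V.dim V = W.dim W"
proof -
  obtain \<phi> \<chi> where \<phi>: "\<phi> \<in> hom_space" "\<phi> \<noteq> 0" and \<chi>: "\<And>e. \<chi> e \<noteq> 0"
    and intertwines: "\<And>e v. v \<in> V \<Longrightarrow> actW e (\<phi> v) = scW (\<chi> e) (\<phi> (actV e v))"
    using exists_projective_intertwiner by blast
  note \<phi>_hom = hom_spaceD[OF \<phi>(1)]
  have nonzero_on_V: "\<exists>v\<in>V. \<phi> v \<noteq> 0"
    using \<phi>(2) \<phi>_hom(3) by (metis ext zero_fun_apply)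
  have "{v \<in> V. \<phi> v = 0} = {0} \<or> {v \<in> V. \<phi> v = 0} = V"
  proof (rule V.irreducibleD[OF assms(1) V.linear_on_subspace_kernel[OF V.subspace_V \<phi>_hom(1)]])
    fix e u assume "u \<in> {v \<in> V. \<phi> v = 0}"
    then show "actV e u \<in> {v \<in> V. \<phi> v = 0}"
      using intertwines[of u e] W.act_scale[OF W.subspace_0[OF W.subspace_V], of e 0] \<chi>[of e]
        V.act_closed by simp
  qed blast
  then have "inj_on \<phi> V"
    using nonzero_on_V V.inj_on_if_linear_on_kernel_trivial[OF V.subspace_V \<phi>_hom(1)] by blast
  have "\<phi> ` V = {0} \<or> \<phi> ` V = W"
  proof (rule W.irreducibleD[OF assms(2) V.linear_on_subspace_image[OF V.subspace_V \<phi>_hom(1)]])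
    show "vector_space scW" by unfold_locales
    show "\<phi> ` V \<subseteq> W" using \<phi>_hom(2) by blast
    fix e w assume "w \<in> \<phi> ` V"
    then obtain v where "v \<in> V" "w = \<phi> v" by blast
    then have "actW e w = \<phi> (scV (\<chi> e) (actV e v))"
      using intertwines V.act_closed linear_on_scale[OF \<phi>_hom(1)] by simp
    then show "actW e w \<in> \<phi> ` V"
      using \<open>v \<in> V\<close> V.act_closed V.subspace_scale[OF V.subspace_V] by blast
  qed
  then have "bij_betw \<phi> V W"
    using nonzero_on_V \<open>inj_on \<phi> V\<close> by (auto simp: bij_betw_def)
  interpret vector_space_pair scV scW by unfold_locales
  show ?thesis by (rule dim_eq_if_bij_betw_linear_on[OF V.subspace_V \<phi>_hom(1) \<open>bij_betw \<phi> V W\<close>])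
qed

end


section \<open>Simple Yetter-Drinfeld modules\<close>

lemma Phi_tilde_nonzero: "normalized_3cocycle \<Phi> \<Longrightarrow> Phi_tilde \<Phi> g e f \<noteq> 0"
  unfolding normalized_3cocycle_def Phi_tilde_def by simp

lemma yd_objectD:
  assumes "yd_object sc \<Phi> V cmp act"
  shows "vector_space sc" and "module.subspace sc (cmp g)" and "cmp g \<subseteq> V"
    and "V = {sum x UNIV | x. \<forall>g. x g \<in> cmp g}"
    and "\<forall>g. x g \<in> cmp g \<Longrightarrow> sum x UNIV = 0 \<Longrightarrow> x g = 0"
    and "v \<in> cmp g \<Longrightarrow> act e v \<in> cmp g"
    and "u \<in> V \<Longrightarrow> v \<in> V \<Longrightarrow> act e (sc c u + v) = sc c (act e u) + act e v"
    and "v \<in> V \<Longrightarrow> act 0 v = v"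
    and "v \<in> cmp g \<Longrightarrow> act e (act f v) = sc (Phi_tilde \<Phi> g e f) (act (e + f) v)"
proof -
  have "vector_space sc" and cmp: "\<forall>g. module.subspace sc (cmp g) \<and> cmp g \<subseteq> V"
    and "V = {sum x UNIV | x. \<forall>g. x g \<in> cmp g}"
    and direct: "\<forall>x. (\<forall>g. x g \<in> cmp g) \<and> sum x UNIV = 0 \<longrightarrow> (\<forall>g. x g = 0)"
    and stable: "\<forall>e g v. v \<in> cmp g \<longrightarrow> act e v \<in> cmp g"
    and linear: "\<forall>e c. \<forall>u\<in>V. \<forall>v\<in>V. act e (sc c u + v) = sc c (act e u) + act e v"
    and unit: "\<forall>v\<in>V. act 0 v = v"
    and twisted: "\<forall>g e f. \<forall>v\<in>cmp g. act e (act f v) = sc (Phi_tilde \<Phi> g e f) (act (e + f) v)"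
    using assms unfolding yd_object_def by meson+
  then show "vector_space sc" "V = {sum x UNIV | x. \<forall>g. x g \<in> cmp g}" by blast+
  show "module.subspace sc (cmp g)" "cmp g \<subseteq> V" using cmp by blast+
  show "\<forall>g. x g \<in> cmp g \<Longrightarrow> sum x UNIV = 0 \<Longrightarrow> x g = 0" using direct by blast
  show "v \<in> cmp g \<Longrightarrow> act e v \<in> cmp g" using stable by blast
  show "u \<in> V \<Longrightarrow> v \<in> V \<Longrightarrow> act e (sc c u + v) = sc c (act e u) + act e v" using linear by blast
  show "v \<in> V \<Longrightarrow> act 0 v = v" using unit by blast
  show "v \<in> cmp g \<Longrightarrow> act e (act f v) = sc (Phi_tilde \<Phi> g e f) (act (e + f) v)"
    using twisted by blast
qed

lemma yd_simpleD:
  assumes "yd_simple sc \<Phi> V cmp act"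
  shows "yd_object sc \<Phi> V cmp act" and "V \<noteq> {0}"
    and "yd_subobject sc U V cmp act \<Longrightarrow> U = {0} \<or> U = V"
  using assms unfolding yd_simple_def by blast+

lemma yd_subobject_if_homogeneous:
  assumes obj: "yd_object sc \<Phi> V cmp act" and U: "module.subspace sc U" "U \<subseteq> cmp g"
    and stable: "\<And>e u. u \<in> U \<Longrightarrow> act e u \<in> U"
  shows "yd_subobject sc U V cmp act"
proof -
  interpret vector_space sc using yd_objectD(1)[OF obj] .
  note cmp = yd_objectD(2,3)[OF obj]
  have "U = {sum x UNIV | x. \<forall>h. x h \<in> U \<inter> cmp h}"
  proof (intro equalityI subsetI)
    fix u assume "u \<in> U"
    then have "\<forall>h. (if h = g then u else 0) \<in> U \<inter> cmp h"
      using U subspace_0[OF U(1)] subspace_0[OF cmp(1)] by auto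
    moreover have "u = (\<Sum>h\<in>UNIV. if h = g then u else 0)" by simp
    ultimately show "u \<in> {sum x UNIV | x. \<forall>h. x h \<in> U \<inter> cmp h}"
      unfolding mem_Collect_eq by (intro exI[of _ "\<lambda>h. if h = g then u else 0"] conjI)
  next
    fix y assume "y \<in> {sum x UNIV | x. \<forall>h. x h \<in> U \<inter> cmp h}"
    then obtain x where "y = sum x UNIV" "\<forall>h. x h \<in> U \<inter> cmp h" by blast
    then show "y \<in> U" using subspace_sum[OF U(1), of UNIV x] by simp
  qed
  then show ?thesis
    unfolding yd_subobject_def using U(1) subset_trans[OF U(2) cmp(2)] stable by blast
qed

lemma yd_simple_concentrated:
  assumes simple: "yd_simple sc \<Phi> V cmp act"
  shows "cmp (yd_degree cmp V) = V"
proof -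
  note obj = yd_simpleD(1)[OF simple] and simpleD = yd_simpleD(3)[OF simple]
  interpret vector_space sc using yd_objectD(1)[OF obj] .
  note cmp = yd_objectD(2,3)[OF obj] and V_sums = yd_objectD(4)[OF obj]
    and direct = yd_objectD(5)[OF obj]
  obtain v where v: "v \<in> V" "v \<noteq> 0"
    using yd_simpleD(2)[OF simple] subspace_0[OF cmp(1)] cmp(2) by blast
  have cmp_cases: "cmp g = {0} \<or> cmp g = V" for g
    using simpleD yd_subobject_if_homogeneous[OF obj cmp(1) order_refl] yd_objectD(6)[OF obj]
    by blast
  have "\<exists>g. cmp g = V"
  proof (rule ccontr)
    assume "\<nexists>g. cmp g = V"
    then have "\<forall>g. cmp g = {0}" using cmp_cases by blast
    then have "V \<subseteq> {0}" by (subst V_sums) auto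
    then show False using v by blast
  qed
  moreover have "g = h" if "cmp g = V" "cmp h = V" for g h
  proof (rule ccontr)
    assume "g \<noteq> h"
    let ?x = "\<lambda>k. if k = g then v else if k = h then - v else 0"
    have "\<forall>k. ?x k \<in> cmp k"
      using that v(1) subspace_neg[OF cmp(1)] subspace_0[OF cmp(1)] by auto
    moreover have "sum ?x UNIV = (\<Sum>k\<in>{g, h}. ?x k)"
      by (rule sum.mono_neutral_right) auto
    then have "sum ?x UNIV = 0" using \<open>g \<noteq> h\<close> by simp
    ultimately have "?x g = 0" by (rule direct)
    then show False using v(2) by simp
  qed
  ultimately have "\<exists>!g. cmp g = V" by blast
  then show ?thesis unfolding yd_degree_def by (rule theI')
qed

lemma projective_rep_if_yd_concentrated:
  assumes "normalized_3cocycle \<Phi>" and obj: "yd_object sc \<Phi> V cmp act" and "cmp g = V"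
  shows "projective_rep sc (Phi_tilde \<Phi> g) V act"
proof -
  interpret vector_space sc using yd_objectD(1)[OF obj] .
  have "subspace V" using yd_objectD(2)[OF obj, of g] assms(3) by simp
  note act_lin = yd_objectD(7)[OF obj]
  have "act e 0 = 0" for e
    using act_lin[of 0 0 e 1] subspace_0[OF \<open>subspace V\<close>] by simp
  then have "linear_on sc sc V (act e)" for e
    using act_lin[of _ _ e 1] act_lin[of _ 0 e] subspace_0[OF \<open>subspace V\<close>] by (auto intro!: linear_onI)
  with \<open>subspace V\<close> show ?thesis
    using yd_objectD(6,8,9)[OF obj] assms(3) Phi_tilde_nonzero[OF assms(1)] by unfold_locales auto
qed

lemma irreducible_if_yd_simple:
  assumes "normalized_3cocycle \<Phi>" and simple: "yd_simple sc \<Phi> V cmp act"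
  shows "projective_rep.irreducible sc V act"
proof -
  note obj = yd_simpleD(1)[OF simple]
  have deg: "cmp (yd_degree cmp V) = V" by (rule yd_simple_concentrated[OF simple])
  interpret projective_rep sc "Phi_tilde \<Phi> (yd_degree cmp V)" V act
    by (rule projective_rep_if_yd_concentrated[OF assms(1) obj deg])
  show ?thesis
    unfolding irreducible_def
    using yd_simpleD(2,3)[OF simple] yd_subobject_if_homogeneous[OF obj _ _] deg by blast
qed

theorem proposition4p3:
  fixes \<Phi> :: "'g::{ab_group_add,finite} \<Rightarrow> 'g \<Rightarrow> 'g \<Rightarrow> 'k::{alg_closed_field,field_char_0}"
    and scV :: "'k \<Rightarrow> 'v::ab_group_add \<Rightarrow> 'v" and V :: "'v set"
    and compV :: "'g \<Rightarrow> 'v set" and actV :: "'g \<Rightarrow> 'v \<Rightarrow> 'v"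
    and scW :: "'k \<Rightarrow> 'w::ab_group_add \<Rightarrow> 'w" and W :: "'w set"
    and compW :: "'g \<Rightarrow> 'w set" and actW :: "'g \<Rightarrow> 'w \<Rightarrow> 'w"
  assumes "normalized_3cocycle \<Phi>"
    and "yd_simple scV \<Phi> V compV actV"
    and "yd_simple scW \<Phi> W compW actW"
    and "yd_degree compV V = yd_degree compW W"
  shows "vector_space.dim scV V = vector_space.dim scW W"
proof -
  define g where "g = yd_degree compV V"
  have "compV g = V" unfolding g_def by (rule yd_simple_concentrated[OF assms(2)])
  then have "projective_rep scV (Phi_tilde \<Phi> g) V actV"
    by (rule projective_rep_if_yd_concentrated[OF assms(1) yd_simpleD(1)[OF assms(2)]])
  moreover have "compW g = W" unfolding g_def assms(4) by (rule yd_simple_concentrated[OF assms(3)])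
  then have "projective_rep scW (Phi_tilde \<Phi> g) W actW"
    by (rule projective_rep_if_yd_concentrated[OF assms(1) yd_simpleD(1)[OF assms(3)]])
  moreover have "projective_rep.irreducible scV V actV" "projective_rep.irreducible scW W actW"
    using irreducible_if_yd_simple assms(1-3) by blast+
  ultimately interpret projective_rep_pair scV "Phi_tilde \<Phi> g" V actV scW W actW
    by (simp add: projective_rep_pair_def projective_rep_pair_axioms_def
        projective_rep.irreducible_nonzero)
  show ?thesis
    by (rule dim_eq_if_irreducible) fact+
qed

end
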